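(* Let $\mathcal B$ be the countable set of all finite sequences of positive integers. For each $B=(m_1,\dots,m_k)\in\mathcal B$ choose a tensor $\mathcal T^0_B\in\bigotimes_{i=1}^k\mathbb{C}^{m_i}$, in such a way that the collection of all entries of all the $\mathcal T^0_B$ ($B\in\mathcal B$) is algebraically independent over $\mathbb{Q}$. Then for every tensor network template $(G,c)$ with local ordering $L$, the Version II assignment $v\mapsto\mathcal T^0_{B_v}$ yields a map $\beta(G,c,L;\mathcal T^0)$ whose rank equals $\mathrm{QMF}(G,c,L)$.
   Context: A tensor network template $(G,c)$ consists of a finite undirected graph $G$ with edge set $E$ whose vertex set is partitioned as $S\sqcup T\sqcup V$. Every element of $S$ (inputs) and every element of $T$ (outputs) is an open end of degree $1$; the elements of $V$ are called vertices. For $u\in S\sqcup T$, $e(u)$ denotes the edge incident to $u$. A capacity function $c:E\to\mathbb{Z}_{>0}$ is given, and to each edge $e$ one associates $\mathbb{C}^{c_e}$ with a fixed basis. A local ordering $L$ fixes, at each vertex $v$ of degree $d_v$, an ordering $e(v,1),\dots,e(v,d_v)$ of the incident edge-ends. Given a tensor $\mathcal T_v\in\bigotimes_{i=1}^{d_v}\mathbb{C}^{c_{e(v,i)}}$ at each vertex, let $V_S=\bigotimes_{u\in S}\mathbb{C}^{c_{e(u)}}$ and $V_T=\bigotimes_{u\in T}\mathbb{C}^{c_{e(u)}}$. Contracting the network along all edges gives $\beta\in\mathrm{Hom}(V_S,V_T)$, whose matrix entries are $\langle I_T|\beta|I_S\rangle=\sum_W\prod_{v\in V}(\mathcal T_v)_{W|_v}$.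 Here $W$ ranges over all assignments of basis indices to all edges that agree with $I_S$ on input edges and $I_T$ on output edges, and $W|_v$ is the tuple of indices on $e(v,1),\dots,e(v,d_v)$. Version II: the valence type of $v$ is the sequence $B_v=(c_{e(v,1)},\dots,c_{e(v,d_v)})$. A Version II assignment chooses one tensor $\mathcal T_B\in\bigotimes_i\mathbb{C}^{m_i}$ for each valence type $B=(m_1,\dots,m_k)$ occurring, and places $\mathcal T_{B_v}$ at each vertex $v$. The result is denoted $\beta(G,c,L;\mathcal T)$, and $\mathrm{QMF}(G,c,L)$ is its maximal rank over all Version II assignments. *)

theory Defs
  imports "HOL-Library.FuncSet" Complex_Main
begin

text \<open>S, T, V are the inputs, outputs and vertices;
  E is the edge set; inc n lists the edge-ends at node n (for a vertex v this list,
  in order, is the local ordering e(v,1),...,e(v,d_v); a loop at v appears twice);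
  c is the capacity function.\<close>

definition tn_template ::
  "'n set \<Rightarrow> 'n set \<Rightarrow> 'n set \<Rightarrow> 'e set \<Rightarrow> ('n \<Rightarrow> 'e list) \<Rightarrow> ('e \<Rightarrow> nat) \<Rightarrow> bool" where
  "tn_template S T V E inc c \<longleftrightarrow>
     finite S \<and> finite T \<and> finite V \<and> finite E \<and>
     S \<inter> T = {} \<and> S \<inter> V = {} \<and> T \<inter> V = {} \<and>
     (\<forall>u \<in> S \<union> T. length (inc u) = 1) \<and>
     (\<forall>n \<in> S \<union> T \<union> V. set (inc n) \<subseteq> E) \<and>
     (\<forall>e \<in> E. (\<Sum>n \<in> S \<union> T \<union> V. count_list (inc n) e) = 2) \<and>
     (\<forall>e \<in> E. 0 < c e)"

definition open_edge :: "('n \<Rightarrow> 'e list) \<Rightarrow> 'n \<Rightarrow> 'e" where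
  "open_edge inc u = hd (inc u)"

definition valence_type :: "('n \<Rightarrow> 'e list) \<Rightarrow> ('e \<Rightarrow> nat) \<Rightarrow> 'n \<Rightarrow> nat list" where
  "valence_type inc c v = map c (inc v)"

text \<open>Basis index tuples of V_A = tensor product over open ends u in A (indices 0..c(e(u))-1).\<close>
definition open_indices :: "'n set \<Rightarrow> ('n \<Rightarrow> 'e list) \<Rightarrow> ('e \<Rightarrow> nat) \<Rightarrow> ('n \<Rightarrow> nat) set" where
  "open_indices A inc c = PiE A (\<lambda>u. {..< c (open_edge inc u)})"

text \<open>A Version II assignment is a function Tn with Tn B = the tensor chosen for valence type B,
  given by its entries Tn B (i_1,...,i_k).  Matrix entry <I_T| beta |I_S> of the contraction.\<close>
definition tn_entry ::
  "'n set \<Rightarrow> 'n set \<Rightarrow> 'n set \<Rightarrow> 'e set \<Rightarrow> ('n \<Rightarrow> 'e list) \<Rightarrow> ('e \<Rightarrow> nat) \<Rightarrow>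
   (nat list \<Rightarrow> nat list \<Rightarrow> complex) \<Rightarrow> ('n \<Rightarrow> nat) \<Rightarrow> ('n \<Rightarrow> nat) \<Rightarrow> complex" where
  "tn_entry S T V E inc c Tn IT IS =
     (\<Sum>W \<in> {W \<in> PiE E (\<lambda>e. {..< c e}).
               (\<forall>u\<in>S. W (open_edge inc u) = IS u) \<and> (\<forall>u\<in>T. W (open_edge inc u) = IT u)}.
        \<Prod>v\<in>V. Tn (valence_type inc c v) (map W (inc v)))"

definition mat_rank :: "'r set \<Rightarrow> 'c set \<Rightarrow> ('r \<Rightarrow> 'c \<Rightarrow> complex) \<Rightarrow> nat" where
  "mat_rank R C M = Max {card D | D. D \<subseteq> C \<and> finite D \<and>
      (\<forall>a. (\<forall>r\<in>R. (\<Sum>d\<in>D. a d * M r d) = 0) \<longrightarrow> (\<forall>d\<in>D. a d = 0))}"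

definition tn_rank ::
  "'n set \<Rightarrow> 'n set \<Rightarrow> 'n set \<Rightarrow> 'e set \<Rightarrow> ('n \<Rightarrow> 'e list) \<Rightarrow> ('e \<Rightarrow> nat) \<Rightarrow>
   (nat list \<Rightarrow> nat list \<Rightarrow> complex) \<Rightarrow> nat" where
  "tn_rank S T V E inc c Tn =
     mat_rank (open_indices T inc c) (open_indices S inc c) (tn_entry S T V E inc c Tn)"

definition QMF ::
  "'n set \<Rightarrow> 'n set \<Rightarrow> 'n set \<Rightarrow> 'e set \<Rightarrow> ('n \<Rightarrow> 'e list) \<Rightarrow> ('e \<Rightarrow> nat) \<Rightarrow> nat" where
  "QMF S T V E inc c = Max {tn_rank S T V E inc c Tn | Tn. True}"

definition alg_indep_Q :: "'i set \<Rightarrow> ('i \<Rightarrow> complex) \<Rightarrow> bool" where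
  "alg_indep_Q I x \<longleftrightarrow>
     (\<forall>(M :: ('i \<Rightarrow> nat) set) (a :: ('i \<Rightarrow> nat) \<Rightarrow> rat).
        finite M \<longrightarrow> (\<forall>m\<in>M. finite {i. m i \<noteq> 0} \<and> {i. m i \<noteq> 0} \<subseteq> I) \<longrightarrow>
        (\<Sum>m\<in>M. of_rat (a m) * (\<Prod>i\<in>{i. m i \<noteq> 0}. x i ^ m i)) = 0 \<longrightarrow>
        (\<forall>m\<in>M. a m = 0))"

definition tensor_entry_indices :: "(nat list \<times> nat list) set" where
  "tensor_entry_indices = {(B, idx). (\<forall>m \<in> set B. 0 < m) \<and> length idx = length B \<and>
                                        (\<forall>i < length B. idx ! i < B ! i)}"

end

theory Submission
  imports Defs
begin

text \<open>Every matrix entry of the contracted network is a polynomial with integer coefficients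
  in the entries of the tensors, and so is every quantity obtained from these entries by
  Gaussian elimination, where a pivot step replaces each entry by a 2\<times>2 minor. Linear
  independence of a set of columns is decided by a sequence of such pivots being nonzero.
  A polynomial with rational coefficients that vanishes at an algebraically independent
  point is the zero polynomial, so every pivot that is nonzero for a rank-maximising
  assignment is nonzero at the generic assignment as well; hence the generic assignment
  keeps the same independent columns and attains the maximal rank.\<close>

definition monomial_eval :: "('i \<Rightarrow> nat) \<Rightarrow> ('i \<Rightarrow> complex) \<Rightarrow> complex" where
  "monomial_eval m x = (\<Prod>i\<in>{i. m i \<noteq> 0}. x i ^ m i)"

definition monomial_over :: "'i set \<Rightarrow> ('i \<Rightarrow> nat) \<Rightarrow> bool" where
  "monomial_over I m \<longleftrightarrow> finite {i. m i \<noteq> 0} \<and> {i. m i \<noteq> 0} \<subseteq> I"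

text \<open>Polynomial functions are given by their coefficients on a finite set of monomials, exactly
  the shape of a relation ruled out by \<open>alg_indep_Q\<close>.\<close>

definition rat_poly_fun :: "'i set \<Rightarrow> (('i \<Rightarrow> complex) \<Rightarrow> complex) \<Rightarrow> bool" where
  "rat_poly_fun I P \<longleftrightarrow> (\<exists>M a. finite M \<and> (\<forall>m\<in>M. monomial_over I m) \<and>
     P = (\<lambda>x. \<Sum>m\<in>M. of_rat (a m) * monomial_eval m x))"

lemma monomial_eval_superset:
  assumes "finite A" "{i. m i \<noteq> 0} \<subseteq> A"
  shows "monomial_eval m x = (\<Prod>i\<in>A. x i ^ m i)"
  unfolding monomial_eval_def using assms by (intro prod.mono_neutral_left) auto

lemma monomial_eval_add:
  assumes "finite {i. m i \<noteq> 0}" "finite {i. n i \<noteq> 0}"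
  shows "monomial_eval (\<lambda>i. m i + n i) x = monomial_eval m x * monomial_eval n x"
proof -
  let ?A = "{i. m i \<noteq> 0} \<union> {i. n i \<noteq> 0}"
  have A: "finite ?A" using assms by blast
  have "monomial_eval (\<lambda>i. m i + n i) x = (\<Prod>i\<in>?A. x i ^ m i * x i ^ n i)"
    by (subst monomial_eval_superset[OF A]) (auto simp: power_add)
  also have "\<dots> = monomial_eval m x * monomial_eval n x"
    by (simp add: prod.distrib monomial_eval_superset[OF A])
  finally show ?thesis .
qed

lemma monomial_over_add:
  "monomial_over I m \<Longrightarrow> monomial_over I n \<Longrightarrow> monomial_over I (\<lambda>i. m i + n i)"
  unfolding monomial_over_def
  by (auto intro: finite_subset[of _ "{i. m i \<noteq> 0} \<union> {i. n i \<noteq> 0}"])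

lemma rat_poly_fun_vanishes_everywhere:
  assumes "alg_indep_Q I x0" "rat_poly_fun I P" "P x0 = 0"
  shows "P y = 0"
proof -
  obtain M a where M: "finite M" "\<forall>m\<in>M. monomial_over I m"
    and P: "P = (\<lambda>x. \<Sum>m\<in>M. of_rat (a m) * monomial_eval m x)"
    using assms(2) unfolding rat_poly_fun_def by blast
  have "\<forall>m\<in>M. a m = 0"
    using assms(1) M assms(3) unfolding alg_indep_Q_def monomial_over_def P monomial_eval_def
    by blast
  then show ?thesis by (simp add: P)
qed

lemma rat_poly_fun_const: "rat_poly_fun I (\<lambda>x. of_rat q)"
  unfolding rat_poly_fun_def
  by (intro exI[of _ "{\<lambda>_. 0}"] exI[of _ "\<lambda>_. q"]) (simp add: monomial_over_def monomial_eval_def)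

lemma rat_poly_fun_var:
  assumes "i \<in> I"
  shows "rat_poly_fun I (\<lambda>x. x i)"
proof -
  let ?m = "\<lambda>j. if j = i then 1 else 0 :: nat"
  have "{j. ?m j \<noteq> 0} = {i}" by auto
  then show ?thesis unfolding rat_poly_fun_def using assms
    by (intro exI[of _ "{?m}"] exI[of _ "\<lambda>_. 1"]) (simp add: monomial_over_def monomial_eval_def)
qed

lemma rat_poly_fun_scale:
  "rat_poly_fun I P \<Longrightarrow> rat_poly_fun I (\<lambda>x. of_rat q * P x)"
  unfolding rat_poly_fun_def
  by (auto simp: sum_distrib_left of_rat_mult mult.assoc intro!: exI[of _ "\<lambda>m. q * _ m"])

lemma rat_poly_fun_add:
  assumes "rat_poly_fun I P" "rat_poly_fun I Q"
  shows "rat_poly_fun I (\<lambda>x. P x + Q x)"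
proof -
  obtain M a where M: "finite M" "\<forall>m\<in>M. monomial_over I m"
    and P: "P = (\<lambda>x. \<Sum>m\<in>M. of_rat (a m) * monomial_eval m x)"
    using assms(1) unfolding rat_poly_fun_def by blast
  obtain N b where N: "finite N" "\<forall>m\<in>N. monomial_over I m"
    and Q: "Q = (\<lambda>x. \<Sum>m\<in>N. of_rat (b m) * monomial_eval m x)"
    using assms(2) unfolding rat_poly_fun_def by blast
  define ab where "ab m = (if m \<in> M then a m else 0) + (if m \<in> N then b m else 0)" for m
  have "(\<Sum>m\<in>M \<union> N. of_rat (ab m) * monomial_eval m x) = P x + Q x" for x
  proof -
    have "(\<Sum>m\<in>M \<union> N. of_rat (ab m) * monomial_eval m x)
        = (\<Sum>m\<in>M \<union> N. if m \<in> M then of_rat (a m) * monomial_eval m x else 0)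
          + (\<Sum>m\<in>M \<union> N. if m \<in> N then of_rat (b m) * monomial_eval m x else 0)"
      unfolding ab_def sum.distrib[symmetric] by (intro sum.cong) (auto simp: of_rat_add distrib_right)
    also have "\<dots> = P x + Q x"
      using M(1) N(1) by (simp add: sum.inter_restrict[symmetric] Int_absorb1 Int_absorb2 P Q)
    finally show ?thesis .
  qed
  then show ?thesis
    unfolding rat_poly_fun_def using M N by (intro exI[of _ "M \<union> N"] exI[of _ ab]) auto
qed

lemma rat_poly_fun_mult:
  assumes "rat_poly_fun I P" "rat_poly_fun I Q"
  shows "rat_poly_fun I (\<lambda>x. P x * Q x)"
proof -
  obtain M a where M: "finite M" "\<forall>m\<in>M. monomial_over I m"
    and P: "P = (\<lambda>x. \<Sum>m\<in>M. of_rat (a m) * monomial_eval m x)"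
    using assms(1) unfolding rat_poly_fun_def by blast
  obtain N b where N: "finite N" "\<forall>m\<in>N. monomial_over I m"
    and Q: "Q = (\<lambda>x. \<Sum>m\<in>N. of_rat (b m) * monomial_eval m x)"
    using assms(2) unfolding rat_poly_fun_def by blast
  define plus where "plus p = (\<lambda>i. fst p i + snd p i)" for p :: "('a \<Rightarrow> nat) \<times> ('a \<Rightarrow> nat)"
  define ab where "ab k = (\<Sum>p\<in>{p \<in> M \<times> N. plus p = k}. a (fst p) * b (snd p))" for k
  have fin: "finite (M \<times> N)" "finite (plus ` (M \<times> N))" using M(1) N(1) by auto
  have "P x * Q x = (\<Sum>p\<in>M \<times> N. of_rat (a (fst p) * b (snd p)) * monomial_eval (plus p) x)" for x
    using M(2) N(2)
    by (auto simp: P Q sum_product sum.cartesian_product plus_def monomial_over_def of_rat_mult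
        monomial_eval_add intro!: sum.cong)
  also have "\<dots> x = (\<Sum>k\<in>plus ` (M \<times> N). of_rat (ab k) * monomial_eval k x)" for x
    unfolding ab_def of_rat_sum sum_distrib_right sum.group[OF fin order_refl, symmetric]
    by (intro sum.cong) auto
  finally have "(\<lambda>x. P x * Q x) = (\<lambda>x. \<Sum>k\<in>plus ` (M \<times> N). of_rat (ab k) * monomial_eval k x)"
    by (rule ext)
  moreover have "\<forall>k\<in>plus ` (M \<times> N). monomial_over I k"
    using M(2) N(2) by (auto simp: plus_def monomial_over_add)
  ultimately show ?thesis
    unfolding rat_poly_fun_def using fin(2) by blast
qed

lemma rat_poly_fun_sum:
  "(\<And>k. k \<in> K \<Longrightarrow> rat_poly_fun I (f k)) \<Longrightarrow> rat_poly_fun I (\<lambda>x. \<Sum>k\<in>K. f k x)"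
proof (induction K rule: infinite_finite_induct)
  case (infinite K)
  then show ?case using rat_poly_fun_const[of I 0] by simp
next
  case empty
  then show ?case using rat_poly_fun_const[of I 0] by simp
next
  case (insert k K)
  then show ?case by (simp add: rat_poly_fun_add)
qed

lemma rat_poly_fun_prod:
  "(\<And>k. k \<in> K \<Longrightarrow> rat_poly_fun I (f k)) \<Longrightarrow> rat_poly_fun I (\<lambda>x. \<Prod>k\<in>K. f k x)"
proof (induction K rule: infinite_finite_induct)
  case (infinite K)
  then show ?case using rat_poly_fun_const[of I 1] by simp
next
  case empty
  then show ?case using rat_poly_fun_const[of I 1] by simp
next
  case (insert k K)
  then show ?case by (simp add: rat_poly_fun_mult)
qed

lemma rat_poly_fun_minor:
  assumes "rat_poly_fun I f" "rat_poly_fun I g" "rat_poly_fun I h" "rat_poly_fun I k"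
  shows "rat_poly_fun I (\<lambda>x. f x * g x - h x * k x)"
  using rat_poly_fun_add[OF rat_poly_fun_mult[OF assms(1,2)]
      rat_poly_fun_scale[OF rat_poly_fun_mult[OF assms(3,4)], of "-1"]]
  by simp

definition columns_independent :: "'r set \<Rightarrow> 'd set \<Rightarrow> ('r \<Rightarrow> 'd \<Rightarrow> complex) \<Rightarrow> bool" where
  "columns_independent R D M \<longleftrightarrow>
     (\<forall>a. (\<forall>r\<in>R. (\<Sum>d\<in>D. a d * M r d) = 0) \<longrightarrow> (\<forall>d\<in>D. a d = 0))"

lemma columns_independent_nonzero_entry:
  assumes "columns_independent R D M" "finite D" "d0 \<in> D"
  obtains r where "r \<in> R" "M r d0 \<noteq> 0"
proof -
  let ?a = "\<lambda>d. if d = d0 then 1 else 0 :: complex"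
  have "(\<Sum>d\<in>D. ?a d * M r d) = M r d0" for r
  proof -
    have "(\<Sum>d\<in>D. ?a d * M r d) = (\<Sum>d\<in>D. if d = d0 then M r d else 0)"
      by (intro sum.cong) auto
    then show ?thesis using assms(2,3) by simp
  qed
  moreover have "\<not> (\<forall>r\<in>R. (\<Sum>d\<in>D. ?a d * M r d) = 0)"
    using spec[OF assms(1)[unfolded columns_independent_def], of ?a] assms(3) by auto
  ultimately show ?thesis using that by auto
qed

text \<open>One pivot step at \<open>(r0, d0)\<close>, scaled by the pivot instead of divided by it, so that
  polynomial entries stay polynomial.\<close>

lemma columns_independent_insert_iff_eliminated:
  assumes "d0 \<notin> D" "finite D" "r0 \<in> R" "M r0 d0 \<noteq> 0"
  shows "columns_independent R (insert d0 D) M \<longleftrightarrow>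
         columns_independent R D (\<lambda>r d. M r0 d0 * M r d - M r d0 * M r0 d)"
    (is "_ \<longleftrightarrow> columns_independent R D ?E")
proof -
  have expand: "(\<Sum>d\<in>D. a d * ?E r d) =
      M r0 d0 * (\<Sum>d\<in>D. a d * M r d) - M r d0 * (\<Sum>d\<in>D. a d * M r0 d)" for a r
    by (simp add: sum_distrib_left sum_subtractf algebra_simps)
  show ?thesis
  proof
    assume ind: "columns_independent R (insert d0 D) M"
    show "columns_independent R D ?E"
      unfolding columns_independent_def
    proof (intro allI impI)
      fix a assume H: "\<forall>r\<in>R. (\<Sum>d\<in>D. a d * ?E r d) = 0"
      define b where "b = a(d0 := - (\<Sum>d\<in>D. a d * M r0 d) / M r0 d0)"
      have "(\<Sum>d\<in>insert d0 D. b d * M r d) = 0" if "r \<in> R" for r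
      proof -
        have "(\<Sum>d\<in>D. b d * M r d) = (\<Sum>d\<in>D. a d * M r d)"
          unfolding b_def using assms(1) by (intro sum.cong) auto
        moreover have "M r0 d0 * (\<Sum>d\<in>D. a d * M r d) = M r d0 * (\<Sum>d\<in>D. a d * M r0 d)"
          using H that expand[of a r] by simp
        ultimately show ?thesis
          using assms(1,2,4) by (simp add: b_def field_simps)
      qed
      then have "\<forall>d\<in>insert d0 D. b d = 0"
        using ind unfolding columns_independent_def by blast
      then show "\<forall>d\<in>D. a d = 0"
        using assms(1) unfolding b_def by (metis fun_upd_other insertCI)
    qed
  next
    assume ind: "columns_independent R D ?E"
    show "columns_independent R (insert d0 D) M"
      unfolding columns_independent_def
    proof (intro allI impI)
      fix b assume H: "\<forall>r\<in>R. (\<Sum>d\<in>insert d0 D. b d * M r d) = 0"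
      then have HD: "(\<Sum>d\<in>D. b d * M r d) = - (b d0 * M r d0)" if "r \<in> R" for r
        using that assms(1,2) by (simp add: add_eq_0_iff)
      have "(\<Sum>d\<in>D. b d * ?E r d) = 0" if "r \<in> R" for r
        using HD[OF that] HD[OF assms(3)] expand[of b r] by (simp add: algebra_simps)
      then have bD: "\<forall>d\<in>D. b d = 0"
        using ind unfolding columns_independent_def by blast
      then have "b d0 * M r0 d0 = 0" using HD[OF assms(3)] by simp
      with bD assms(4) show "\<forall>d\<in>insert d0 D. b d = 0" by simp
    qed
  qed
qed

lemma columns_independent_transfer:
  assumes closed: "\<And>f g h k. f \<in> P \<Longrightarrow> g \<in> P \<Longrightarrow> h \<in> P \<Longrightarrow> k \<in> P \<Longrightarrow>
                      (\<lambda>x. f x * g x - h x * k x) \<in> P"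
    and nonzero: "\<And>f. f \<in> P \<Longrightarrow> f y \<noteq> 0 \<Longrightarrow> f z \<noteq> 0"
    and "finite D" "\<And>r d. r \<in> R \<Longrightarrow> d \<in> D \<Longrightarrow> F r d \<in> P"
    and "columns_independent R D (\<lambda>r d. F r d y)"
  shows "columns_independent R D (\<lambda>r d. F r d z)"
  using assms(3-5)
proof (induction D arbitrary: F rule: finite_induct)
  case empty
  then show ?case by (simp add: columns_independent_def)
next
  case (insert d0 D F)
  obtain r0 where r0: "r0 \<in> R" "F r0 d0 y \<noteq> 0"
    using columns_independent_nonzero_entry[OF insert.prems(2)] insert.hyps(1) by blast
  have "F r0 d0 z \<noteq> 0" using nonzero insert.prems(1) r0 by blast
  define G where "G r d = (\<lambda>x. F r0 d0 x * F r d x - F r d0 x * F r0 d x)" for r d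
  have "columns_independent R D (\<lambda>r d. G r d y)"
    using insert.prems(2) unfolding G_def
    by (simp add: columns_independent_insert_iff_eliminated[OF insert.hyps(2,1) r0(1),
          where M = "\<lambda>r d. F r d y"] r0(2))
  then have "columns_independent R D (\<lambda>r d. G r d z)"
    using insert.IH[of G] insert.prems(1) r0(1) unfolding G_def by (auto intro: closed)
  then show ?case
    unfolding G_def
    by (simp add: columns_independent_insert_iff_eliminated[OF insert.hyps(2,1) r0(1),
          where M = "\<lambda>r d. F r d z"] \<open>F r0 d0 z \<noteq> 0\<close>)
qed

lemma mat_rank_eq_Max:
  "mat_rank R C M = Max {card D | D. D \<subseteq> C \<and> finite D \<and> columns_independent R D M}"
  unfolding mat_rank_def columns_independent_def ..

lemma finite_independent_column_cards:
  assumes "finite C"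
  shows "finite {card D | D. D \<subseteq> C \<and> finite D \<and> columns_independent R D M}"
  by (rule finite_subset[of _ "{..card C}"]) (auto intro: card_mono assms)

lemma empty_columns_independent: "columns_independent R {} M"
  by (simp add: columns_independent_def)

lemma mat_rank_attained:
  assumes "finite C"
  obtains D where "D \<subseteq> C" "columns_independent R D M" "card D = mat_rank R C M"
proof -
  let ?K = "{card D | D. D \<subseteq> C \<and> finite D \<and> columns_independent R D M}"
  have "card {} \<in> ?K"
    by (intro CollectI exI[of _ "{}"]) (simp add: empty_columns_independent)
  then have "Max ?K \<in> ?K"
    using Max_in[OF finite_independent_column_cards[OF assms]] by blast
  then obtain D where "D \<subseteq> C" "columns_independent R D M" "card D = Max ?K"
    by auto
  then show ?thesis
    by (intro that) (simp_all add: mat_rank_eq_Max)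
qed

lemma mat_rank_le_card:
  assumes "finite C"
  shows "mat_rank R C M \<le> card C"
proof -
  obtain D where "D \<subseteq> C" "card D = mat_rank R C M"
    using mat_rank_attained[OF assms] .
  then show ?thesis using card_mono[OF assms] by metis
qed

lemma card_le_mat_rank:
  assumes "finite C" "D \<subseteq> C" "columns_independent R D M"
  shows "card D \<le> mat_rank R C M"
  unfolding mat_rank_eq_Max
  using assms finite_subset[OF assms(2,1)]
  by (intro Max_ge[OF finite_independent_column_cards[OF assms(1)]]) auto

lemma finite_open_indices: "finite A \<Longrightarrow> finite (open_indices A inc c)"
  unfolding open_indices_def by (intro finite_PiE) auto

lemma finite_tn_ranks:
  assumes "finite S"
  shows "finite {tn_rank S T V E inc c Tn | Tn. True}"
  by (rule finite_subset[of _ "{..card (open_indices S inc c)}"])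
    (auto simp: tn_rank_def intro: mat_rank_le_card finite_open_indices assms)

lemma tn_rank_le_QMF: "finite S \<Longrightarrow> tn_rank S T V E inc c Tn \<le> QMF S T V E inc c"
  unfolding QMF_def by (intro Max_ge[OF finite_tn_ranks]) auto

lemma QMF_attained:
  assumes "finite S"
  obtains Tn where "tn_rank S T V E inc c Tn = QMF S T V E inc c"
proof -
  let ?Q = "{tn_rank S T V E inc c Tn | Tn. True}"
  have "Max ?Q \<in> ?Q"
    by (rule Max_in[OF finite_tn_ranks[OF assms]]) blast
  then obtain Tn where "tn_rank S T V E inc c Tn = Max ?Q"
    by auto
  then show ?thesis
    by (intro that) (simp add: QMF_def)
qed

lemma rat_poly_fun_tn_entry:
  assumes "tn_template S T V E inc c"
  shows "rat_poly_fun tensor_entry_indices (\<lambda>y. tn_entry S T V E inc c (\<lambda>B idx. y (B, idx)) IT IS)"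
  unfolding tn_entry_def
proof (intro rat_poly_fun_sum rat_poly_fun_prod rat_poly_fun_var)
  fix W v
  assume W: "W \<in> {W \<in> PiE E (\<lambda>e. {..< c e}).
               (\<forall>u\<in>S. W (open_edge inc u) = IS u) \<and> (\<forall>u\<in>T. W (open_edge inc u) = IT u)}"
    and v: "v \<in> V"
  have "set (inc v) \<subseteq> E" "\<forall>e\<in>E. 0 < c e"
    using assms v unfolding tn_template_def by auto
  with W show "(valence_type inc c v, map W (inc v)) \<in> tensor_entry_indices"
    unfolding tensor_entry_indices_def valence_type_def by (auto simp: PiE_iff dest: nth_mem)
qed

theorem proposition4p5:
  fixes T0 :: "nat list \<Rightarrow> nat list \<Rightarrow> complex"
    and S T V :: "'n set" and E :: "'e set"
    and inc :: "'n \<Rightarrow> 'e list" and c :: "'e \<Rightarrow> nat"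
  assumes "alg_indep_Q tensor_entry_indices (\<lambda>(B, idx). T0 B idx)"
    and "tn_template S T V E inc c"
  shows "tn_rank S T V E inc c T0 = QMF S T V E inc c"
proof -
  let ?C = "open_indices S inc c" and ?R = "open_indices T inc c"
  define F where "F IT IS y = tn_entry S T V E inc c (\<lambda>B idx. y (B, idx)) IT IS" for IT IS y
  have "finite S" using assms(2) unfolding tn_template_def by simp
  then have fin: "finite ?C" by (rule finite_open_indices)
  obtain Tn where Tn: "tn_rank S T V E inc c Tn = QMF S T V E inc c"
    using QMF_attained[OF \<open>finite S\<close>] .
  obtain D where D: "D \<subseteq> ?C" "columns_independent ?R D (\<lambda>IT IS. F IT IS (\<lambda>(B, idx). Tn B idx))"
    and card: "card D = tn_rank S T V E inc c Tn"
    using mat_rank_attained[OF fin] unfolding tn_rank_def F_def by auto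
  have "columns_independent ?R D (\<lambda>IT IS. F IT IS (\<lambda>(B, idx). T0 B idx))"
  proof (rule columns_independent_transfer[where P = "Collect (rat_poly_fun tensor_entry_indices)"])
    show "finite D" using D(1) fin by (rule finite_subset)
    show "F IT IS \<in> Collect (rat_poly_fun tensor_entry_indices)" for IT IS
      using rat_poly_fun_tn_entry[OF assms(2)] unfolding F_def by simp
    show "f (\<lambda>(B, idx). T0 B idx) \<noteq> 0" if "f \<in> Collect (rat_poly_fun tensor_entry_indices)"
      and "f (\<lambda>(B, idx). Tn B idx) \<noteq> 0" for f
      using that rat_poly_fun_vanishes_everywhere[OF assms(1)] by blast
  qed (use D(2) in \<open>auto intro: rat_poly_fun_minor\<close>)
  then have "card D \<le> tn_rank S T V E inc c T0"
    using card_le_mat_rank[OF fin D(1)] unfolding tn_rank_def F_def by simp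
  then show ?thesis
    using tn_rank_le_QMF[OF \<open>finite S\<close>] Tn card by (metis le_antisym)
qed

end
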